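(* If $g\in\mathcal{G}_0^\infty$ and $\mathcal{P}$ is a finite partition with positive Shannon dynamical entropy $h(\eta,\mathcal{P})>0$, then $h(g,\mathcal{P})=\infty$.
   Context: $\mathcal{G}_0$ is the set of concave functions $g:[0,1]\to\mathbb{R}$ with $g(0)=\lim_{x\to0^+}g(x)=0$. Let $\eta(x)=-x\log x$ and $\eta(0)=0$. Define $\mathcal{G}_0^\infty=\{g\in\mathcal{G}_0:\lim_{x\to0^+}g(x)/\eta(x)=\infty\}$. $T$ is a measure-preserving map of a probability space $(X,\Sigma,\mu)$. For a finite measurable partition $\mathcal{P}$, let $\mathcal{P}_n=\bigvee_{i=0}^{n-1}T^{-i}\mathcal{P}$, $H(g,\mathcal{P})=\sum_{A\in\mathcal{P}}g(\mu(A))$, and $h(g,\mathcal{P})=\limsup_{n\to\infty}\frac1nH(g,\mathcal{P}_n)$. *)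

theory Defs
  imports "HOL-Probability.Probability"
begin

definition eta :: "real \<Rightarrow> real" where
  "eta x = (if x = 0 then 0 else - x * ln x)"

definition G0 :: "(real \<Rightarrow> real) set" where
  "G0 = {g. concave_on {0..1} g \<and> g 0 = 0 \<and> (g \<longlongrightarrow> 0) (at_right 0)}"

definition G0_inf :: "(real \<Rightarrow> real) set" where
  "G0_inf = {g \<in> G0. filterlim (\<lambda>x. g x / eta x) at_top (at_right 0)}"

definition measure_preserving_map :: "'a measure \<Rightarrow> ('a \<Rightarrow> 'a) \<Rightarrow> bool" where
  "measure_preserving_map M T \<longleftrightarrow> T \<in> M \<rightarrow>\<^sub>M M \<and>
     (\<forall>A \<in> sets M. measure M (T -` A \<inter> space M) = measure M A)"

definition finite_meas_partition :: "'a measure \<Rightarrow> 'a set set \<Rightarrow> bool" where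
  "finite_meas_partition M P \<longleftrightarrow> finite P \<and> P \<subseteq> sets M \<and> \<Union>P = space M \<and>
     (\<forall>A\<in>P. \<forall>B\<in>P. A \<noteq> B \<longrightarrow> A \<inter> B = {})"

definition iter_join :: "'a measure \<Rightarrow> ('a \<Rightarrow> 'a) \<Rightarrow> 'a set set \<Rightarrow> nat \<Rightarrow> 'a set set" where
  "iter_join M T P n = {space M \<inter> (\<Inter>i<n. (T ^^ i) -` (C i)) | C. \<forall>i<n. C i \<in> P}"

definition gen_entropy :: "'a measure \<Rightarrow> (real \<Rightarrow> real) \<Rightarrow> 'a set set \<Rightarrow> real" where
  "gen_entropy M g P = (\<Sum>A\<in>P. g (measure M A))"

definition gen_dyn_entropy ::
  "'a measure \<Rightarrow> ('a \<Rightarrow> 'a) \<Rightarrow> (real \<Rightarrow> real) \<Rightarrow> 'a set set \<Rightarrow> ereal" where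
  "gen_dyn_entropy M T g P =
     limsup (\<lambda>n. ereal (gen_entropy M g (iter_join M T P n) / real n))"

end

theory Submission
  imports Defs
begin

text \<open>Since \<open>g/\<eta> \<rightarrow> \<infinity>\<close> at \<open>0\<close> and \<open>g\<close> dominates its chord \<open>x g(1)\<close>, for every \<open>K\<close> there is a
  \<open>c\<close> with \<open>g(x) \<ge> K \<eta>(x) - c x\<close> on \<open>[0,1]\<close>. Summing over the cells of \<open>\<P>\<^sub>n\<close>, whose masses add
  up to at most \<open>1\<close>, gives \<open>H(g,\<P>\<^sub>n) \<ge> K H(\<eta>,\<P>\<^sub>n) - c\<close>; dividing by \<open>n\<close> yields
  \<open>h(g,\<P>) \<ge> K h(\<eta>,\<P>)\<close> for every \<open>K\<close>, hence \<open>h(g,\<P>) = \<infinity>\<close> when \<open>h(\<eta>,\<P>) > 0\<close>.\<close>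

lemma concave_on_ge_chord_from_0:
  fixes g :: "real \<Rightarrow> real"
  assumes "concave_on {0..1} g" "g 0 = 0" "x \<in> {0..1}"
  shows "x * g 1 \<le> g x"
  using concave_onD[OF assms(1), of x 0 1] assms(2,3) by auto

lemma eta_le_of_ge:
  assumes "0 < d" "d \<le> x"
  shows "eta x \<le> x * - ln d"
  using assms by (simp add: eta_def mult_left_mono)

lemma G0_inf_ge_multiple_of_eta:
  assumes g: "g \<in> G0_inf" and K: "K \<ge> 0"
  obtains c where "c \<ge> 0" "\<And>x. x \<in> {0..1} \<Longrightarrow> K * eta x - c * x \<le> g x"
proof -
  have conc: "concave_on {0..1} g" and g0: "g 0 = 0"
    and lim: "filterlim (\<lambda>x. g x / eta x) at_top (at_right 0)"
    using g by (auto simp: G0_inf_def G0_def)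
  have "\<forall>\<^sub>F x in at_right 0. K < g x / eta x"
    using lim by (simp add: filterlim_at_top_dense)
  then obtain d0 where "0 < d0" and near_0: "\<And>x. 0 < x \<Longrightarrow> x < d0 \<Longrightarrow> K < g x / eta x"
    unfolding eventually_at_right_field by auto
  define d where "d = min d0 1"
  have d: "0 < d" "d \<le> 1"
    using \<open>0 < d0\<close> by (auto simp: d_def)
  define c where "c = \<bar>g 1\<bar> + K * - ln d"
  have "0 \<le> K * - ln d"
    using K d by (intro mult_nonneg_nonneg) simp_all
  then have "c \<ge> 0"
    unfolding c_def using abs_ge_zero[of "g 1"] by linarith
  moreover have "K * eta x - c * x \<le> g x" if x: "x \<in> {0..1}" for x
  proof (cases "x < d")
    case True
    show ?thesis
    proof (cases "x = 0")
      case False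
      then have x': "0 < x" "x < 1" "x < d0" using x True d by (auto simp: d_def)
      then have "eta x > 0" by (simp add: eta_def mult_pos_neg)
      with near_0[OF x'(1,3)] have "K * eta x < g x"
        by (simp add: field_simps)
      with \<open>c \<ge> 0\<close> \<open>0 < x\<close> show ?thesis
        by (smt (verit) mult_nonneg_nonneg)
    qed (simp add: g0 eta_def)
  next
    case False
    have "K * eta x \<le> K * (x * - ln d)"
      using False d by (intro mult_left_mono[OF eta_le_of_ge K]) simp_all
    moreover have "- \<bar>g 1\<bar> * x \<le> g x"
      using concave_on_ge_chord_from_0[OF conc g0 x] x
      by (smt (verit) mult.commute mult_right_mono abs_ge_minus_self atLeastAtMost_iff)
    ultimately show ?thesis
      by (simp add: c_def algebra_simps)
  qed
  ultimately show thesis by (rule that)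
qed

lemma iter_join_eq_image_PiE:
  "iter_join M T P n = (\<lambda>C. space M \<inter> (\<Inter>i<n. (T ^^ i) -` C i)) ` ({..<n} \<rightarrow>\<^sub>E P)"
    (is "_ = ?cell ` _")
proof -
  have "?cell C \<in> ?cell ` ({..<n} \<rightarrow>\<^sub>E P)" if "\<forall>i<n. C i \<in> P" for C
    using that by (intro image_eqI[of _ _ "restrict C {..<n}"]) auto
  then show ?thesis
    unfolding iter_join_def by auto
qed

lemma iter_join_finite: "finite P \<Longrightarrow> finite (iter_join M T P n)"
  unfolding iter_join_eq_image_PiE by (simp add: finite_PiE)

lemma iter_join_sets:
  assumes T: "T \<in> M \<rightarrow>\<^sub>M M" and P: "P \<subseteq> sets M"
  shows "iter_join M T P n \<subseteq> sets M"
proof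
  fix A assume "A \<in> iter_join M T P n"
  then obtain C where C: "\<forall>i<n. C i \<in> P" and A: "A = space M \<inter> (\<Inter>i<n. (T ^^ i) -` C i)"
    unfolding iter_join_def by auto
  have "(T ^^ i) -` C i \<inter> space M \<in> sets M" if "i < n" for i
    using C P that measurable_sets[OF measurable_compose_n[OF T]] by blast
  then have "n \<noteq> 0 \<Longrightarrow> (\<Inter>i<n. (T ^^ i) -` C i \<inter> space M) \<in> sets M"
    by (intro sets.finite_INT) auto
  moreover have "A = (if n = 0 then space M else (\<Inter>i<n. (T ^^ i) -` C i \<inter> space M))"
    using A by auto
  ultimately show "A \<in> sets M"
    by (cases "n = 0") auto
qed

lemma iter_join_disjoint:
  assumes "disjoint P"
  shows "disjoint (iter_join M T P n)"
proof (rule disjointI)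
  fix A B assume "A \<in> iter_join M T P n" "B \<in> iter_join M T P n" "A \<noteq> B"
  then obtain C D where C: "\<forall>i<n. C i \<in> P" and A: "A = space M \<inter> (\<Inter>i<n. (T ^^ i) -` C i)"
    and D: "\<forall>i<n. D i \<in> P" and B: "B = space M \<inter> (\<Inter>i<n. (T ^^ i) -` D i)"
    unfolding iter_join_def by auto
  show "A \<inter> B = {}"
  proof (rule ccontr)
    assume "A \<inter> B \<noteq> {}"
    then obtain x where "x \<in> A" "x \<in> B" by auto
    then have "(T ^^ i) x \<in> C i \<inter> D i" if "i < n" for i
      using A B that by auto
    then have "\<forall>i<n. C i = D i"
      using assms C D by (metis disjointD empty_iff)
    then show False
      using A B \<open>A \<noteq> B\<close> by auto
  qed
qed

lemma (in prob_space) sum_measure_disjoint_le_1: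
  assumes "finite Q" "Q \<subseteq> events" "disjoint Q"
  shows "(\<Sum>A\<in>Q. prob A) \<le> 1"
proof -
  have "(\<Sum>A\<in>Q. prob A) = prob (\<Union>A\<in>Q. id A)"
    using assms measure_finite_Union[of Q id M]
    by (simp add: disjoint_image_disjoint_family_on)
  also have "\<dots> \<le> 1" by (rule prob_le_1)
  finally show ?thesis .
qed

lemma gen_entropy_ge_multiple_of_eta_entropy:
  assumes M: "prob_space M" and Q: "finite Q" "Q \<subseteq> sets M" "disjoint Q"
    and c: "c \<ge> 0" and g: "\<And>x. x \<in> {0..1} \<Longrightarrow> K * eta x - c * x \<le> g x"
  shows "K * gen_entropy M eta Q - c \<le> gen_entropy M g Q"
proof -
  interpret prob_space M by fact
  have "K * gen_entropy M eta Q - c \<le> K * gen_entropy M eta Q - c * (\<Sum>A\<in>Q. prob A)"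
    using sum_measure_disjoint_le_1[OF Q] c by (simp add: mult_left_le)
  also have "\<dots> = (\<Sum>A\<in>Q. K * eta (prob A) - c * prob A)"
    by (simp add: gen_entropy_def sum_subtractf sum_distrib_left)
  also have "\<dots> \<le> gen_entropy M g Q"
    unfolding gen_entropy_def using g by (intro sum_mono) auto
  finally show ?thesis .
qed

lemma ereal_eq_infty_if_multiples_le:
  fixes L x :: ereal
  assumes "0 < L" and le: "\<And>K. K \<ge> 0 \<Longrightarrow> ereal K * L \<le> x"
  shows "x = \<infinity>"
proof (rule ereal_top)
  fix B :: real
  show "ereal B \<le> x"
  proof (cases L)
    case (real l)
    with \<open>0 < L\<close> have "ereal B \<le> ereal (\<bar>B\<bar> / l) * L" by simp
    also have "\<dots> \<le> x" using \<open>0 < L\<close> real by (intro le) simp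
    finally show ?thesis .
  next
    case PInf
    then show ?thesis using le[of 1] by simp
  qed (use \<open>0 < L\<close> in simp)
qed

text \<open>The additive constant \<open>C\<close> may depend on \<open>K\<close>: after division by \<open>n\<close> it disappears in the limit.\<close>
lemma limsup_averages_infinite:
  fixes u v :: "nat \<Rightarrow> real"
  assumes pos: "0 < limsup (\<lambda>n. ereal (u n / real n))"
    and dom: "\<And>K. K \<ge> 0 \<Longrightarrow> \<exists>C. \<forall>n. K * u n - C \<le> v n"
  shows "limsup (\<lambda>n. ereal (v n / real n)) = \<infinity>"
proof (rule ereal_eq_infty_if_multiples_le[OF pos])
  fix K :: real assume "K \<ge> 0"
  then obtain C where C: "\<And>n. K * u n - C \<le> v n" using dom by blast
  have "(\<lambda>n. ereal (- C / real n)) \<longlonglongrightarrow> 0"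
    using tendsto_ereal[OF lim_const_over_n[of "- C"]] by (simp add: zero_ereal_def)
  then have "limsup (\<lambda>n. ereal (- C / real n) + ereal K * ereal (u n / real n))
      = 0 + limsup (\<lambda>n. ereal K * ereal (u n / real n))"
    by (rule ereal_limsup_lim_add) simp
  then have "ereal K * limsup (\<lambda>n. ereal (u n / real n))
      = limsup (\<lambda>n. ereal (- C / real n) + ereal K * ereal (u n / real n))"
    by (simp only: add_0_left Limsup_ereal_mult_left[OF sequentially_bot \<open>K \<ge> 0\<close>])
  also have "\<dots> \<le> limsup (\<lambda>n. ereal (v n / real n))"
  proof (rule Limsup_mono[OF always_eventually], rule allI)
    fix n
    have "(K * u n - C) / real n \<le> v n / real n"
      using C by (simp add: divide_right_mono)
    then show "ereal (- C / real n) + ereal K * ereal (u n / real n) \<le> ereal (v n / real n)"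
      by (simp add: diff_divide_distrib)
  qed
  finally show "ereal K * limsup (\<lambda>n. ereal (u n / real n)) \<le> limsup (\<lambda>n. ereal (v n / real n))" .
qed

theorem mainTheorem8:
  fixes M :: "'a measure" and T :: "'a \<Rightarrow> 'a" and g :: "real \<Rightarrow> real" and P :: "'a set set"
  assumes "prob_space M"
    and "measure_preserving_map M T"
    and "g \<in> G0_inf"
    and "finite_meas_partition M P"
    and "gen_dyn_entropy M T eta P > 0"
  shows "gen_dyn_entropy M T g P = \<infinity>"
proof -
  have T: "T \<in> M \<rightarrow>\<^sub>M M" using assms(2) by (simp add: measure_preserving_map_def)
  have P: "finite P" "P \<subseteq> sets M" "disjoint P"
    using assms(4) by (auto simp: finite_meas_partition_def disjoint_def)
  have "\<exists>c. \<forall>n. K * gen_entropy M eta (iter_join M T P n) - c \<le> gen_entropy M g (iter_join M T P n)"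
    if "K \<ge> 0" for K
  proof -
    obtain c where "c \<ge> 0" "\<And>x. x \<in> {0..1} \<Longrightarrow> K * eta x - c * x \<le> g x"
      using G0_inf_ge_multiple_of_eta[OF assms(3) \<open>K \<ge> 0\<close>] by blast
    then show ?thesis
      using gen_entropy_ge_multiple_of_eta_entropy[OF assms(1) iter_join_finite[OF P(1)]
          iter_join_sets[OF T P(2)] iter_join_disjoint[OF P(3)]] by blast
  qed
  with assms(5) show ?thesis
    unfolding gen_dyn_entropy_def by (rule limsup_averages_infinite)
qed

end
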